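(* With $G$, $d$, $G_0$, $X$ and the topology $\tau$ as in the context, the space $(X,\tau)$ is regular.
   Context: Let $G$ be a Polish group, $d$ a compatible right-invariant metric on $G$ (i.e. $d(g_0h,g_1h)=d(g_0,g_1)$) bounded by $1$, and $G_0$ a countable dense subgroup of $G$. Let $\mathcal L(G,d)$ be the set of functions $f:G\to[0,1]$ with $|f(g_1)-f(g_2)|\le d(g_1,g_2)$ for all $g_1,g_2$. Let $\mathbb Q^{<\mathbb N}$ be the set of finite sequences of rationals; for $s\in\mathbb Q^{<\mathbb N}$ and rationals $a_1,\dots,a_k$, $sa_1\dots a_k$ denotes the sequence $s$ followed by $a_1,\dots,a_k$ (natural numbers are regarded as rationals). Elements of $\mathcal L(G,d)^{\mathbb Q^{<\mathbb N}}$ are families $\vec f=(f_s)_{s\in\mathbb Q^{<\mathbb N}}$, and $G$ acts by $(g\cdot\vec f)_s(g_0)=f_s(g_0g)$. Let $X$ be the set of $\vec f\in\mathcal L(G,d)^{\mathbb Q^{<\mathbb N}}$ such that, writing $t=sq_0q_1q_2\,0\,m\,n$ and $u=sq_0q_1q_2\,1\,m\,n$: (1) for all $s\in\mathbb Q^{<\mathbb N}$, $g_0\in G_0$, $m,n\in\mathbb N$, $q_0,q_1,q_2,\epsilon\in\mathbb Q\cap(0,1)$ with $0<q_i\pm\epsilon<1$ ($i=0,1,2$): $f_t(g_0)<q_1-\epsilon$ or $f_s(g_0)\le q_0+\epsilon$; (2) for the same range of parameters: $f_u(g_0)\ge q_2+\epsilon$ or $f_t(g_0)\ge q_1-\epsilon$;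 (3) for all $s\in\mathbb Q^{<\mathbb N}$, $g_0\in G_0$, $q_0,\epsilon\in\mathbb Q\cap(0,1)$: if $f_s(g_0)<q_0$ then there are $q_1,q_2\in\mathbb Q$, $g_1\in G_0$, $m,n\in\mathbb N$ with $0<q_2<q_1<q_0<1$, $d(g_0,g_1)<\epsilon$, and $f_u(g_1)<q_2$ where $u=sq_0q_1q_2\,1\,m\,n$. The topology $\tau$ on $X$ is the one generated by the subbasis of all sets $\{\vec f\in X: f_s(g_0)<q_0\}$ for $s\in\mathbb Q^{<\mathbb N}$, $g_0\in G_0$, $q_0\in\mathbb Q$. *)

theory Defs
  imports "HOL-Analysis.Analysis"
begin

text \<open>The Polish group G is modelled as a type of class group_add; the group
  operation is written + (not assumed commutative), the identity is 0 and the
  inverse is unary minus.\<close>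

definition gtop :: "('g \<Rightarrow> 'g \<Rightarrow> real) \<Rightarrow> 'g topology" where
  "gtop d = Metric_space.mtopology UNIV d"

definition polish_group_metric :: "('g::group_add \<Rightarrow> 'g \<Rightarrow> real) \<Rightarrow> bool" where
  "polish_group_metric d \<longleftrightarrow>
     Metric_space UNIV d \<and>
     completely_metrizable_space (gtop d) \<and> separable_space (gtop d) \<and>
     continuous_map (prod_topology (gtop d) (gtop d)) (gtop d) (\<lambda>(x, y). x + y) \<and>
     continuous_map (gtop d) (gtop d) uminus"

definition right_invariant :: "('g::group_add \<Rightarrow> 'g \<Rightarrow> real) \<Rightarrow> bool" where
  "right_invariant d \<longleftrightarrow> (\<forall>g0 g1 h. d (g0 + h) (g1 + h) = d g0 g1)"

definition countable_dense_subgroup :: "('g::group_add \<Rightarrow> 'g \<Rightarrow> real) \<Rightarrow> 'g set \<Rightarrow> bool" where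
  "countable_dense_subgroup d G0 \<longleftrightarrow>
     countable G0 \<and> 0 \<in> G0 \<and> (\<forall>x\<in>G0. \<forall>y\<in>G0. x + y \<in> G0) \<and> (\<forall>x\<in>G0. - x \<in> G0) \<and>
     (gtop d) closure_of G0 = UNIV"

definition Lip :: "('g \<Rightarrow> 'g \<Rightarrow> real) \<Rightarrow> ('g \<Rightarrow> real) set" where
  "Lip d = {f. (\<forall>g. 0 \<le> f g \<and> f g \<le> 1) \<and> (\<forall>g1 g2. \<bar>f g1 - f g2\<bar> \<le> d g1 g2)}"

definition unitQ :: "rat \<Rightarrow> bool" where
  "unitQ q \<longleftrightarrow> 0 < q \<and> q < 1"

text \<open>The space X.  Sequences s q0 q1 q2 i m n are s @ [q0,q1,q2,i,m,n].\<close>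
definition Xsp :: "('g \<Rightarrow> 'g \<Rightarrow> real) \<Rightarrow> 'g set \<Rightarrow> (rat list \<Rightarrow> 'g \<Rightarrow> real) set" where
  "Xsp d G0 = {F. (\<forall>s. F s \<in> Lip d) \<and>
    (\<forall>s. \<forall>g0\<in>G0. \<forall>m n::nat. \<forall>q0 q1 q2 \<epsilon>.
       unitQ q0 \<and> unitQ q1 \<and> unitQ q2 \<and> unitQ \<epsilon> \<and>
       unitQ (q0 + \<epsilon>) \<and> unitQ (q0 - \<epsilon>) \<and> unitQ (q1 + \<epsilon>) \<and> unitQ (q1 - \<epsilon>) \<and>
       unitQ (q2 + \<epsilon>) \<and> unitQ (q2 - \<epsilon>) \<longrightarrow>
       (F (s @ [q0, q1, q2, 0, of_nat m, of_nat n]) g0 < of_rat (q1 - \<epsilon>)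
          \<or> F s g0 \<le> of_rat (q0 + \<epsilon>)) \<and>
       (F (s @ [q0, q1, q2, 1, of_nat m, of_nat n]) g0 \<ge> of_rat (q2 + \<epsilon>)
          \<or> F (s @ [q0, q1, q2, 0, of_nat m, of_nat n]) g0 \<ge> of_rat (q1 - \<epsilon>))) \<and>
    (\<forall>s. \<forall>g0\<in>G0. \<forall>q0 \<epsilon>. unitQ q0 \<and> unitQ \<epsilon> \<and> F s g0 < of_rat q0 \<longrightarrow>
       (\<exists>q1 q2. \<exists>g1\<in>G0. \<exists>m n::nat. 0 < q2 \<and> q2 < q1 \<and> q1 < q0 \<and> q0 < 1 \<and>
          d g0 g1 < of_rat \<epsilon> \<and>
          F (s @ [q0, q1, q2, 1, of_nat m, of_nat n]) g1 < of_rat q2))}"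

definition tau :: "('g \<Rightarrow> 'g \<Rightarrow> real) \<Rightarrow> 'g set \<Rightarrow> (rat list \<Rightarrow> 'g \<Rightarrow> real) topology" where
  "tau d G0 = topology_generated_by
     {{F \<in> Xsp d G0. F s g0 < of_rat q0} | s g0 q0. g0 \<in> G0}"

end

theory Submission
  imports Defs
begin

text \<open>Let \<open>x\<close> lie in a subbasic set \<open>f\<^sub>s(g\<^sub>0) < q\<^sub>0\<close> and pick a rational
  \<open>q\<^sub>0'\<close> with \<open>x\<^sub>s(g\<^sub>0) < q\<^sub>0' < q\<^sub>0\<close>.  Condition (3) yields \<open>g\<^sub>1\<close> close to \<open>g\<^sub>0\<close> and
  a node \<open>u\<close> with \<open>x\<^sub>u(g\<^sub>1) < q\<^sub>2\<close>; the subbasic set \<open>U = {f\<^sub>u(g\<^sub>1) < q\<^sub>2}\<close> is the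
  required neighbourhood.  By condition (2), \<open>U\<close> and hence its closure lie in the
  closed set \<open>{f\<^sub>t(g\<^sub>1) \<ge> q\<^sub>1 - \<delta>}\<close>; by condition (1) this forces
  \<open>f\<^sub>s(g\<^sub>1) \<le> q\<^sub>0' + \<delta>\<close>, and as \<open>q\<^sub>0' + \<delta> + d(g\<^sub>0,g\<^sub>1) < q\<^sub>0\<close>, the Lipschitz bound
  gives \<open>f\<^sub>s(g\<^sub>0) < q\<^sub>0\<close>.
  Regularity then passes from the subbasis to all open sets of \<open>\<tau>\<close>.\<close>

lemma regular_spaceI_closure_of:
  assumes "\<And>W x. openin X W \<Longrightarrow> x \<in> W \<Longrightarrow> \<exists>U. openin X U \<and> x \<in> U \<and> X closure_of U \<subseteq> W"
  shows "regular_space X"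
  unfolding regular_space
proof (intro allI impI)
  fix C a
  assume "closedin X C \<and> a \<in> topspace X - C"
  then obtain U where "openin X U" "a \<in> U" "X closure_of U \<subseteq> topspace X - C"
    using assms[of "topspace X - C" a] by (meson closedin_def)
  then show "\<exists>U. openin X U \<and> a \<in> U \<and> disjnt C (X closure_of U)"
    by (auto simp: disjnt_def)
qed

lemma regular_space_topology_generated_by:
  fixes S :: "'a set set"
  defines "T \<equiv> topology_generated_by S"
  assumes subbasic: "\<And>B x. B \<in> S \<Longrightarrow> x \<in> B \<Longrightarrow> \<exists>U. openin T U \<and> x \<in> U \<and> T closure_of U \<subseteq> B"
  shows "regular_space T"
proof (rule regular_spaceI_closure_of)
  fix W x
  assume "openin T W" "x \<in> W"
  then have "generate_topology_on S W"
    by (simp add: T_def openin_topology_generated_by_iff)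
  then show "\<exists>U. openin T U \<and> x \<in> U \<and> T closure_of U \<subseteq> W"
    using \<open>x \<in> W\<close>
  proof (induction arbitrary: x)
    case Empty
    then show ?case by simp
  next
    case (Int a b)
    obtain U1 where "openin T U1" "x \<in> U1" "T closure_of U1 \<subseteq> a"
      using Int.IH(1) Int.prems by blast
    moreover obtain U2 where "openin T U2" "x \<in> U2" "T closure_of U2 \<subseteq> b"
      using Int.IH(2) Int.prems by blast
    moreover have "T closure_of (U1 \<inter> U2) \<subseteq> T closure_of U1 \<inter> T closure_of U2"
      by (simp add: closure_of_mono)
    ultimately have "openin T (U1 \<inter> U2)" "x \<in> U1 \<inter> U2" "T closure_of (U1 \<inter> U2) \<subseteq> a \<inter> b"
      by auto
    then show ?case
      by blast
  next
    case (UN K)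
    then obtain k where "k \<in> K" "x \<in> k"
      by blast
    moreover from this obtain U where "openin T U" "x \<in> U" "T closure_of U \<subseteq> k"
      using UN.IH by blast
    ultimately show ?case
      by (meson Union_upper order_trans)
  next
    case (Basis B)
    then show ?case
      using subbasic by blast
  qed
qed

lemma Xsp_in_Lip: "F \<in> Xsp d G0 \<Longrightarrow> F s \<in> Lip d"
  by (simp add: Xsp_def)

lemma Xsp_bounds:
  assumes "F \<in> Xsp d G0"
  shows "0 \<le> F s g" and "F s g \<le> 1"
  using Xsp_in_Lip[OF assms] by (simp_all add: Lip_def)

lemma Xsp_Lipschitz:
  assumes "F \<in> Xsp d G0"
  shows "\<bar>F s g1 - F s g2\<bar> \<le> d g1 g2"
  using Xsp_in_Lip[OF assms] by (simp add: Lip_def)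

definition admissible :: "rat \<Rightarrow> rat \<Rightarrow> rat \<Rightarrow> rat \<Rightarrow> bool" where
  "admissible q0 q1 q2 \<epsilon> \<longleftrightarrow>
     unitQ q0 \<and> unitQ q1 \<and> unitQ q2 \<and> unitQ \<epsilon> \<and>
     unitQ (q0 + \<epsilon>) \<and> unitQ (q0 - \<epsilon>) \<and> unitQ (q1 + \<epsilon>) \<and> unitQ (q1 - \<epsilon>) \<and>
     unitQ (q2 + \<epsilon>) \<and> unitQ (q2 - \<epsilon>)"

lemma admissibleI:
  assumes "0 < \<epsilon>" "\<epsilon> < q2" "q2 < q1" "q1 < q0" "q0 + \<epsilon> < 1"
  shows "admissible q0 q1 q2 \<epsilon>"
  using assms unfolding admissible_def unitQ_def by linarith

lemma Xsp_conditions_1_2: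
  assumes "F \<in> Xsp d G0" "g \<in> G0" "admissible q0 q1 q2 \<epsilon>"
  shows "of_rat (q1 - \<epsilon>) \<le> F (s @ [q0, q1, q2, 0, of_nat m, of_nat n]) g
           \<Longrightarrow> F s g \<le> of_rat (q0 + \<epsilon>)"
    and "F (s @ [q0, q1, q2, 1, of_nat m, of_nat n]) g < of_rat (q2 + \<epsilon>)
           \<Longrightarrow> of_rat (q1 - \<epsilon>) \<le> F (s @ [q0, q1, q2, 0, of_nat m, of_nat n]) g"
proof -
  have "\<forall>s. \<forall>g0\<in>G0. \<forall>m n::nat. \<forall>q0 q1 q2 \<epsilon>. admissible q0 q1 q2 \<epsilon> \<longrightarrow>
       (F (s @ [q0, q1, q2, 0, of_nat m, of_nat n]) g0 < of_rat (q1 - \<epsilon>)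
          \<or> F s g0 \<le> of_rat (q0 + \<epsilon>)) \<and>
       (F (s @ [q0, q1, q2, 1, of_nat m, of_nat n]) g0 \<ge> of_rat (q2 + \<epsilon>)
          \<or> F (s @ [q0, q1, q2, 0, of_nat m, of_nat n]) g0 \<ge> of_rat (q1 - \<epsilon>))"
    using assms(1) unfolding Xsp_def admissible_def mem_Collect_eq by (elim conjE) assumption
  then have "(F (s @ [q0, q1, q2, 0, of_nat m, of_nat n]) g < of_rat (q1 - \<epsilon>)
          \<or> F s g \<le> of_rat (q0 + \<epsilon>)) \<and>
       (F (s @ [q0, q1, q2, 1, of_nat m, of_nat n]) g \<ge> of_rat (q2 + \<epsilon>)
          \<or> F (s @ [q0, q1, q2, 0, of_nat m, of_nat n]) g \<ge> of_rat (q1 - \<epsilon>))"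
    using assms(2,3) by blast
  then show "of_rat (q1 - \<epsilon>) \<le> F (s @ [q0, q1, q2, 0, of_nat m, of_nat n]) g
           \<Longrightarrow> F s g \<le> of_rat (q0 + \<epsilon>)"
    and "F (s @ [q0, q1, q2, 1, of_nat m, of_nat n]) g < of_rat (q2 + \<epsilon>)
           \<Longrightarrow> of_rat (q1 - \<epsilon>) \<le> F (s @ [q0, q1, q2, 0, of_nat m, of_nat n]) g"
    by linarith+
qed

lemma Xsp_condition_3:
  assumes "F \<in> Xsp d G0" "g0 \<in> G0" "unitQ q0" "unitQ \<epsilon>" "F s g0 < of_rat q0"
  obtains q1 q2 g1 m n where "g1 \<in> G0" "0 < q2" "q2 < q1" "q1 < q0"
    "d g0 g1 < of_rat \<epsilon>" "F (s @ [q0, q1, q2, 1, of_nat m, of_nat n]) g1 < of_rat q2"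
proof -
  have "\<forall>s. \<forall>g0\<in>G0. \<forall>q0 \<epsilon>. unitQ q0 \<and> unitQ \<epsilon> \<and> F s g0 < of_rat q0 \<longrightarrow>
       (\<exists>q1 q2. \<exists>g1\<in>G0. \<exists>m n::nat. 0 < q2 \<and> q2 < q1 \<and> q1 < q0 \<and> q0 < 1 \<and>
          d g0 g1 < of_rat \<epsilon> \<and> F (s @ [q0, q1, q2, 1, of_nat m, of_nat n]) g1 < of_rat q2)"
    using assms(1) unfolding Xsp_def mem_Collect_eq by (elim conjE) assumption
  with assms(2-) that show thesis
    by blast
qed

lemma topspace_tau_subset: "topspace (tau d G0) \<subseteq> Xsp d G0"
  unfolding tau_def topology_generated_by_topspace by blast

lemma openin_tau_less:
  assumes "g \<in> G0"
  shows "openin (tau d G0) {F \<in> Xsp d G0. F s g < of_rat q}"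
  unfolding tau_def using assms by (intro topology_generated_by_Basis) blast

lemma closedin_tau_ge:
  assumes "g \<in> G0"
  shows "closedin (tau d G0) {F \<in> topspace (tau d G0). of_rat q \<le> F s g}"
proof -
  have "{F \<in> topspace (tau d G0). of_rat q \<le> F s g}
          = topspace (tau d G0) - {F \<in> Xsp d G0. F s g < of_rat q}"
    using topspace_tau_subset by fastforce
  then show ?thesis
    by (simp add: closedin_diff openin_tau_less assms)
qed

lemma tau_closure_of_less_subset_ge:
  assumes g: "g \<in> G0" and adm: "admissible q0 q1 q2 \<delta>"
  shows "tau d G0 closure_of {F \<in> Xsp d G0. F (s @ [q0, q1, q2, 1, of_nat m, of_nat n]) g < of_rat q2}
           \<subseteq> {F \<in> topspace (tau d G0). of_rat (q1 - \<delta>) \<le> F (s @ [q0, q1, q2, 0, of_nat m, of_nat n]) g}"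
    (is "_ closure_of ?U \<subseteq> ?C")
proof (rule closure_of_minimal)
  show "closedin (tau d G0) ?C"
    using g by (rule closedin_tau_ge)
  have "(of_rat q2 :: real) < of_rat (q2 + \<delta>)"
    using adm by (simp add: admissible_def unitQ_def of_rat_less)
  then have "?U \<subseteq> {F \<in> Xsp d G0. of_rat (q1 - \<delta>) \<le> F (s @ [q0, q1, q2, 0, of_nat m, of_nat n]) g}"
    using Xsp_conditions_1_2(2)[OF _ g adm] by fastforce
  moreover have "?U \<subseteq> topspace (tau d G0)"
    using openin_subset[OF openin_tau_less[OF g]] .
  ultimately show "?U \<subseteq> ?C"
    by blast
qed

lemma tau_closure_of_less_subset_less:
  assumes "g0 \<in> G0" "g1 \<in> G0" "admissible q0' q1 q2 \<delta>"
    and near: "d g0 g1 + of_rat (q0' + \<delta>) < of_rat q0"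
  shows "tau d G0 closure_of {F \<in> Xsp d G0. F (s @ [q0', q1, q2, 1, of_nat m, of_nat n]) g1 < of_rat q2}
           \<subseteq> {F \<in> Xsp d G0. F s g0 < of_rat q0}"
proof (rule subset_trans[OF tau_closure_of_less_subset_ge[OF assms(2,3)]], clarify)
  fix F
  assume "F \<in> topspace (tau d G0)"
    and t: "of_rat (q1 - \<delta>) \<le> F (s @ [q0', q1, q2, 0, of_nat m, of_nat n]) g1"
  then have F: "F \<in> Xsp d G0"
    using topspace_tau_subset by blast
  have "F s g1 \<le> of_rat (q0' + \<delta>)"
    using t by (rule Xsp_conditions_1_2(1)[OF F assms(2,3)])
  moreover have "\<bar>F s g0 - F s g1\<bar> \<le> d g0 g1"
    using F by (rule Xsp_Lipschitz)
  ultimately have "F s g0 < of_rat q0"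
    using near by linarith
  with F show "F \<in> Xsp d G0 \<and> F s g0 < of_rat q0"
    by blast
qed

lemma tau_subbasic_closed_nbhd:
  assumes g0: "g0 \<in> G0" and x: "x \<in> Xsp d G0" "x s g0 < of_rat q0"
  shows "\<exists>U. openin (tau d G0) U \<and> x \<in> U \<and>
           tau d G0 closure_of U \<subseteq> {F \<in> Xsp d G0. F s g0 < of_rat q0}"
proof (cases "1 < q0")
  case True
  then have "(1 :: real) < of_rat q0"
    by (metis of_rat_1 of_rat_less)
  then have "Xsp d G0 \<subseteq> {F \<in> Xsp d G0. F s g0 < of_rat q0}"
    using Xsp_bounds(2) by (fastforce intro: le_less_trans)
  then have "tau d G0 closure_of {F \<in> Xsp d G0. F s g0 < of_rat q0}
               \<subseteq> {F \<in> Xsp d G0. F s g0 < of_rat q0}"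
    using closure_of_subset_topspace topspace_tau_subset by (meson order_trans)
  then show ?thesis
    using openin_tau_less[OF g0] x by blast
next
  case False
  obtain q0' where q0': "x s g0 < of_rat q0'" "q0' < q0"
    using of_rat_dense[OF x(2)] of_rat_less by blast
  moreover have "0 \<le> x s g0"
    using Xsp_bounds(1)[OF x(1)] .
  ultimately have "0 < q0'"
    by (metis le_less_trans of_rat_0 of_rat_less)
  define \<epsilon> where "\<epsilon> = (q0 - q0') / 2"
  have "unitQ q0'" "unitQ \<epsilon>"
    using \<open>0 < q0'\<close> \<open>q0' < q0\<close> False by (simp_all add: unitQ_def \<epsilon>_def)
  obtain q1 q2 g1 m n where g1: "g1 \<in> G0" and "0 < q2" "q2 < q1" "q1 < q0'"
    and "d g0 g1 < of_rat \<epsilon>" and xu: "x (s @ [q0', q1, q2, 1, of_nat m, of_nat n]) g1 < of_rat q2"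
    by (rule Xsp_condition_3[OF x(1) g0 \<open>unitQ q0'\<close> \<open>unitQ \<epsilon>\<close> q0'(1)])
  define \<delta> where "\<delta> = min \<epsilon> (min q2 (1 - q0')) / 2"
  have "0 < \<delta>" "\<delta> < \<epsilon>" "\<delta> < q2" "q0' + \<delta> < 1"
    using \<open>0 < q2\<close> \<open>q1 < q0'\<close> \<open>unitQ \<epsilon>\<close> \<open>unitQ q0'\<close>
    by (auto simp: \<delta>_def unitQ_def min_def field_simps)
  then have adm: "admissible q0' q1 q2 \<delta>"
    using \<open>q2 < q1\<close> \<open>q1 < q0'\<close> by (intro admissibleI)
  have "of_rat (q0' + \<delta>) + of_rat \<epsilon> < (of_rat q0 :: real)"
    using \<open>\<delta> < \<epsilon>\<close> by (simp add: of_rat_add[symmetric] of_rat_less \<epsilon>_def field_simps)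
  with \<open>d g0 g1 < of_rat \<epsilon>\<close> have "d g0 g1 + of_rat (q0' + \<delta>) < of_rat q0"
    by linarith
  let ?U = "{F \<in> Xsp d G0. F (s @ [q0', q1, q2, 1, of_nat m, of_nat n]) g1 < of_rat q2}"
  have "tau d G0 closure_of ?U \<subseteq> {F \<in> Xsp d G0. F s g0 < of_rat q0}"
    using g0 g1 adm \<open>d g0 g1 + of_rat (q0' + \<delta>) < of_rat q0\<close>
    by (rule tau_closure_of_less_subset_less)
  moreover have "openin (tau d G0) ?U"
    using g1 by (rule openin_tau_less)
  moreover have "x \<in> ?U"
    using x(1) xu by simp
  ultimately show ?thesis
    by blast
qed

theorem lemma2p5:
  fixes d :: "'g::group_add \<Rightarrow> 'g \<Rightarrow> real" and G0 :: "'g set"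
  assumes "polish_group_metric d"
    and "right_invariant d"
    and "\<forall>x y. d x y \<le> 1"
    and "countable_dense_subgroup d G0"
  shows "regular_space (tau d G0)"
proof -
  \<comment> \<open>Only the defining conditions of X enter.\<close>
  have "\<exists>U. openin (tau d G0) U \<and> x \<in> U \<and> tau d G0 closure_of U \<subseteq> B"
    if "B \<in> {{F \<in> Xsp d G0. F s g0 < of_rat q0} | s g0 q0. g0 \<in> G0}" and "x \<in> B" for B x
  proof -
    from that obtain s g0 q0 where "g0 \<in> G0" and B: "B = {F \<in> Xsp d G0. F s g0 < of_rat q0}"
      by blast
    with \<open>x \<in> B\<close> show ?thesis
      using tau_subbasic_closed_nbhd[OF \<open>g0 \<in> G0\<close>] by simp
  qed
  then show ?thesis
    unfolding tau_def by (rule regular_space_topology_generated_by)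
qed

end
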